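(* Let $n\ge2$, let $c=(c_{i,j})$ be an $n\times(n+1)$ matrix with entries in $\{0,1\}$, $\sigma_1,\ldots,\sigma_n>0$, $\gamma_1,\ldots,\gamma_{n+1}>0$. Let $\mathbf{X}=(X_1,\ldots,X_n)'$ have decumulative distribution function $\mathbf{P}[X_1>x_1,\ldots,X_n>x_n]=\prod_{j=1}^{n+1}(1+\sum_{i=1}^nc_{i,j}x_i/\sigma_i)^{-\gamma_j}$ for $(x_1,\ldots,x_n)'\in(0,\infty)^n$. For $1\le k\ne l\le n$ let $\gamma^\ast_{c,k}=\sum_jc_{k,j}\gamma_j$ and $\gamma_{c,(k,l)}=\sum_jc_{k,j}c_{l,j}\gamma_j$. If $\gamma^\ast_{c,k}>1$ and $q\in[0,1)$, then \[ \mathbf{E}\left[X_k\mid X_l>VaR_q[X_l]\right]=\frac{\sigma_k}{\gamma^\ast_{c,k}-1}\,{}_2F_1\left(\gamma_{c,(k,l)},1;\gamma^\ast_{c,k};\frac{VaR_q[X_l]}{\sigma_l+VaR_q[X_l]}\right). \]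
   Context: $VaR_q[Y]=\inf\{x:\mathbf{P}[Y\le x]\ge q\}$. ${}_2F_1(a,b;c;z)=\sum_{k=0}^\infty\frac{(a)_k(b)_k}{(c)_k}\frac{z^k}{k!}$ with $(a)_k=\Gamma(a+k)/\Gamma(a)$. *)

theory Defs
  imports "HOL-Probability.Probability"
begin

definition hyp2F1 :: "real \<Rightarrow> real \<Rightarrow> real \<Rightarrow> real \<Rightarrow> real" where
  "hyp2F1 a b c z = (\<Sum>k. pochhammer a k * pochhammer b k / pochhammer c k * z ^ k / fact k)"

text \<open>For q = 0 the literal infimum is
  -infinity (not a real); following the paper's usage we take the left endpoint of the
  support, inf{x. P[Y <= x] > 0}, which coincides with the lower limit of VaR_q as q -> 0+.\<close>
definition VaR :: "'a measure \<Rightarrow> real \<Rightarrow> ('a \<Rightarrow> real) \<Rightarrow> real" where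
  "VaR M q Y = (if q = 0 then Inf {x. measure M {\<omega>\<in>space M. Y \<omega> \<le> x} > 0}
                else Inf {x. measure M {\<omega>\<in>space M. Y \<omega> \<le> x} \<ge> q})"

definition cond_exp_event :: "'a measure \<Rightarrow> ('a \<Rightarrow> real) \<Rightarrow> 'a set \<Rightarrow> real" where
  "cond_exp_event M Z A = (\<integral>\<omega>. indicator A \<omega> * Z \<omega> \<partial>M) / measure M A"

end

theory Submission
  imports Defs
begin

text \<open>
  Since X_k > 0 almost surely, E[X_k; X_l > t] is the integral over x \<ge> 0 of
  P[X_k > x, X_l > t]. Because every c_ij is 0 or 1, this bivariate survival function factors,
  with u = x/\<sigma>_k and z = t/(\<sigma>_l + t), as
  P[X_l > t] (1 + u)^-(\<gamma>*_k - \<gamma>_kl) (1 + (1 - z) u)^-\<gamma>_kl.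
  Expanding the last factor in a binomial series and integrating term by term against the beta
  integrals of the second kind, whose values are n! / ((s - 1) (s)_n), gives Euler's integral
  representation of 2F1(\<gamma>_kl, 1; \<gamma>*_k; z) / (\<gamma>*_k - 1). The quantile VaR_q[X_l] only
  enters through its nonnegativity.
\<close>

text \<open>An antiderivative of \<open>u\<^sup>n (1 + u) powr -(s + n)\<close> that vanishes at infinity (for \<open>s > 1\<close>),
  obtained by integrating by parts.\<close>
fun beta_prime_antideriv :: "real \<Rightarrow> nat \<Rightarrow> real \<Rightarrow> real" where
  "beta_prime_antideriv s 0 u = - ((1 + u) powr (1 - s)) / (s - 1)"
| "beta_prime_antideriv s (Suc n) u =
     (Suc n * beta_prime_antideriv s n u - u ^ Suc n * (1 + u) powr (- (s + n))) / (s + n)"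

lemma has_real_derivative_beta_prime_antideriv:
  assumes "s > 1" "u > -1"
  shows "(beta_prime_antideriv s n has_real_derivative u ^ n * (1 + u) powr (- (s + n))) (at u)"
proof (induction n)
  case 0
  have "((\<lambda>u. - ((1 + u) powr (1 - s)) / (s - 1)) has_real_derivative
      - ((1 - s) * (1 + u) powr (1 - s - 1)) / (s - 1)) (at u)"
    using assms by (auto intro!: derivative_eq_intros)
  moreover have "- ((1 - s) * (1 + u) powr (1 - s - 1)) / (s - 1) = (1 + u) powr (- s)"
    using assms by (simp add: divide_simps algebra_simps)
  ultimately show ?case
    by (simp add: fun_eq_iff[symmetric])
next
  case (Suc n)
  let ?P = "(1 + u) powr (- (s + n))" and ?Q = "(1 + u) powr (- (s + n) - 1)"
  have pow: "((\<lambda>u. u ^ Suc n) has_real_derivative Suc n * u ^ n) (at u)"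
    using DERIV_pow[of "Suc n" u] by simp
  have "((\<lambda>u. (Suc n * beta_prime_antideriv s n u - u ^ Suc n * (1 + u) powr (- (s + n))) / (s + n))
      has_real_derivative (Suc n * (u ^ n * ?P) - (Suc n * u ^ n * ?P + - (s + n) * ?Q * u ^ Suc n))
        / (s + n)) (at u)"
    using assms
    by (intro DERIV_cdivide DERIV_diff DERIV_cmult Suc.IH DERIV_mult pow)
      (auto intro!: derivative_eq_intros)
  moreover have "(Suc n * (u ^ n * ?P) - (Suc n * u ^ n * ?P + - (s + n) * ?Q * u ^ Suc n)) / (s + n)
      = u ^ Suc n * (1 + u) powr (- (s + Suc n))"
  proof -
    have "- (s + n) - 1 = - (s + Suc n)"
      by simp
    moreover have "s + n > 0"
      using assms by simp
    ultimately show ?thesis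
      by (simp only:) (simp add: field_simps)
  qed
  moreover have "beta_prime_antideriv s (Suc n) =
      (\<lambda>u. (Suc n * beta_prime_antideriv s n u - u ^ Suc n * (1 + u) powr (- (s + n))) / (s + n))"
    by (rule ext) (simp only: beta_prime_antideriv.simps)
  ultimately show ?case
    by simp
qed

lemma beta_prime_antideriv_at_0:
  "beta_prime_antideriv s n 0 = - fact n / ((s - 1) * pochhammer s n)"
proof (induction n)
  case (Suc n)
  have "beta_prime_antideriv s (Suc n) 0 = Suc n * (- fact n / ((s - 1) * pochhammer s n)) / (s + n)"
    using Suc.IH by simp
  also have "\<dots> = - (real (Suc n) * fact n) / ((s - 1) * (pochhammer s n * (s + n)))"
    by (simp add: mult.assoc)
  also have "\<dots> = - fact (Suc n) / ((s - 1) * pochhammer s (Suc n))"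
    by (simp add: pochhammer_Suc)
  finally show ?case .
qed simp

lemma beta_prime_antideriv_tendsto_0:
  assumes "s > 1"
  shows "(beta_prime_antideriv s n \<longlongrightarrow> 0) at_top"
proof -
  have decay: "((\<lambda>u. (1 + u) powr (1 - s)) \<longlongrightarrow> 0) at_top"
    using assms
    by (intro tendsto_neg_powr filterlim_tendsto_add_at_top[OF tendsto_const filterlim_ident]) auto
  show ?thesis
  proof (induction n)
    case 0
    show ?case
      using tendsto_divide[OF tendsto_minus[OF decay] tendsto_const, of "s - 1"] assms by simp
  next
    case (Suc n)
    have "((\<lambda>u. u ^ Suc n * (1 + u) powr (- (s + n))) \<longlongrightarrow> 0) at_top"
    proof (rule tendsto_sandwich[OF _ _ tendsto_const decay])
      show "\<forall>\<^sub>F u in at_top. 0 \<le> u ^ Suc n * (1 + u) powr (- (s + n))"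
        using eventually_ge_at_top[of 0] by eventually_elim simp
      show "\<forall>\<^sub>F u in at_top. u ^ Suc n * (1 + u) powr (- (s + n)) \<le> (1 + u) powr (1 - s)"
        using eventually_ge_at_top[of 0]
      proof eventually_elim
        case (elim u)
        have "u ^ Suc n \<le> (1 + u) ^ Suc n"
          using elim by (intro power_mono) simp_all
        also have "\<dots> = (1 + u) powr Suc n"
          using elim by (subst powr_realpow) auto
        finally have "u ^ Suc n \<le> (1 + u) powr Suc n" .
        then have "u ^ Suc n * (1 + u) powr (- (s + n)) \<le> (1 + u) powr Suc n * (1 + u) powr (- (s + n))"
          by (rule mult_right_mono) simp
        also have "\<dots> = (1 + u) powr (1 - s)"
          using elim by (simp add: powr_add[symmetric])
        finally show ?case .
      qed
    qed
    then have "((\<lambda>u. (Suc n * beta_prime_antideriv s n u - u ^ Suc n * (1 + u) powr (- (s + n))) / (s + n))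
        \<longlongrightarrow> (real (Suc n) * 0 - 0) / (s + n)) at_top"
      using assms by (intro tendsto_intros Suc.IH) auto
    then show ?case
      by simp
  qed
qed

lemma nn_integral_beta_prime:
  assumes "s > 1"
  shows "(\<integral>\<^sup>+u. ennreal (u ^ n * (1 + u) powr (- (s + n))) * indicator {0..} u \<partial>lborel)
    = ennreal (fact n / ((s - 1) * pochhammer s n))"
proof -
  have "(\<integral>\<^sup>+u. ennreal (u ^ n * (1 + u) powr (- (s + n))) * indicator {0..} u \<partial>lborel)
      = ennreal (0 - beta_prime_antideriv s n 0)"
    using assms
    by (intro nn_integral_FTC_atLeast has_real_derivative_beta_prime_antideriv
        beta_prime_antideriv_tendsto_0) auto
  then show ?thesis
    by (simp add: beta_prime_antideriv_at_0)
qed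

lemma pochhammer_nonneg_real:
  fixes b :: real
  assumes "0 \<le> b"
  shows "0 \<le> pochhammer b n"
  using assms by (induction n) (auto simp: pochhammer_Suc)

lemma pochhammer_mono_real:
  fixes b s :: real
  assumes "0 \<le> b" "b \<le> s"
  shows "pochhammer b n \<le> pochhammer s n"
proof (induction n)
  case (Suc n)
  have "(b + n) * pochhammer b n \<le> (s + n) * pochhammer s n"
    using Suc assms by (intro mult_mono pochhammer_nonneg_real) auto
  then show ?case
    by (simp add: pochhammer_Suc mult_ac)
qed simp

lemma summable_hyp2F1_one:
  fixes b s z :: real
  assumes "0 \<le> b" "b \<le> s" "s > 0" "0 \<le> z" "z < 1"
  shows "summable (\<lambda>n. pochhammer b n * pochhammer 1 n / pochhammer s n * z ^ n / fact n)"
proof (rule summable_comparison_test'[OF summable_geometric[of z]])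
  fix n
  have "pochhammer s n > 0"
    using assms by (intro pochhammer_pos)
  then have "pochhammer b n / pochhammer s n * z ^ n \<le> 1 * z ^ n"
    using assms pochhammer_mono_real[OF assms(1,2), of n]
    by (intro mult_right_mono) auto
  then show "norm (pochhammer b n * pochhammer 1 n / pochhammer s n * z ^ n / fact n) \<le> z ^ n"
    using assms \<open>pochhammer s n > 0\<close>
    by (simp add: pochhammer_fact[symmetric] pochhammer_nonneg_real)
qed (use assms in auto)

lemma hyp2F1_one_nonneg:
  fixes b s z :: real
  assumes "0 \<le> b" "b \<le> s" "s > 0" "0 \<le> z" "z < 1"
  shows "0 \<le> hyp2F1 b 1 s z"
  unfolding hyp2F1_def
  using assms
  by (intro suminf_nonneg summable_hyp2F1_one divide_nonneg_nonneg mult_nonneg_nonneg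
      pochhammer_nonneg_real) auto

lemma binomial_series_euler_kernel:
  fixes b s z u :: real
  assumes "0 \<le> z" "z < 1" "0 \<le> u"
  shows "(\<lambda>n. pochhammer b n / fact n * z ^ n * (u ^ n * (1 + u) powr (- (s + n))))
    sums ((1 + u) powr (- (s - b)) * (1 + (1 - z) * u) powr (- b))"
proof -
  have "z * u \<le> u"
    using assms by (intro mult_left_le_one_le) auto
  then have "\<bar>- (z * u)\<bar> < 1 + u"
    using assms by simp
  from sums_mult[OF gen_binomial_real''[OF this, of "- b"], of "(1 + u) powr (- (s - b))"]
  have "(\<lambda>n. (1 + u) powr (- (s - b)) * ((- b gchoose n) * (1 + u) powr (- b - n) * (- (z * u)) ^ n))
      sums ((1 + u) powr (- (s - b)) * (1 + u + - (z * u)) powr (- b))" .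
  moreover have "1 + u + - (z * u) = 1 + (1 - z) * u"
    by (simp add: algebra_simps)
  moreover have "(1 + u) powr (- (s - b)) * ((- b gchoose n) * (1 + u) powr (- b - n) * (- (z * u)) ^ n)
      = pochhammer b n / fact n * z ^ n * (u ^ n * (1 + u) powr (- (s + n)))" for n
  proof -
    have "(- (z * u)) ^ n = (- 1) ^ n * (z ^ n * u ^ n)"
      by (simp only: power_minus[of "z * u"] power_mult_distrib)
    then have binom: "(- b gchoose n) * (- (z * u)) ^ n = pochhammer b n / fact n * z ^ n * u ^ n"
      by (simp add: gbinomial_pochhammer minus_one_mult_self)
    have powers: "(1 + u) powr (- (s - b)) * (1 + u) powr (- b - n) = (1 + u) powr (- (s + n))"
      using assms by (simp flip: powr_add)
    have "(1 + u) powr (- (s - b)) * ((- b gchoose n) * (1 + u) powr (- b - n) * (- (z * u)) ^ n)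
        = ((- b gchoose n) * (- (z * u)) ^ n) * ((1 + u) powr (- (s - b)) * (1 + u) powr (- b - n))"
      by (simp only: ac_simps)
    also have "\<dots> = pochhammer b n / fact n * z ^ n * u ^ n * (1 + u) powr (- (s + n))"
      by (simp only: binom powers)
    finally show ?thesis
      by (simp only: ac_simps)
  qed
  ultimately show ?thesis
    by (simp only:)
qed

lemma nn_integral_hyp2F1_euler:
  fixes b s z :: real
  assumes "s > 1" "0 \<le> b" "b \<le> s" "0 \<le> z" "z < 1"
  shows "(\<integral>\<^sup>+u. ennreal ((1 + u) powr (- (s - b)) * (1 + (1 - z) * u) powr (- b)) * indicator {0..} u \<partial>lborel)
    = ennreal (hyp2F1 b 1 s z / (s - 1))"
proof -
  define p where "p n = pochhammer b n / fact n * z ^ n" for n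
  define h where "h n = pochhammer b n * pochhammer 1 n / pochhammer s n * z ^ n / fact n / (s - 1)" for n
  have p_nonneg: "0 \<le> p n" for n
    unfolding p_def using assms by (simp add: pochhammer_nonneg_real)
  have h_summable: "summable h"
    unfolding h_def using assms by (intro summable_divide summable_hyp2F1_one) auto
  have integrand: "ennreal ((1 + u) powr (- (s - b)) * (1 + (1 - z) * u) powr (- b)) * indicator {0..} u
      = (\<Sum>n. ennreal (p n) * (ennreal (u ^ n * (1 + u) powr (- (s + n))) * indicator {0..} u))" for u
  proof (cases "u \<ge> 0")
    case True
    have series: "(\<lambda>n. p n * (u ^ n * (1 + u) powr (- (s + n))))
        sums ((1 + u) powr (- (s - b)) * (1 + (1 - z) * u) powr (- b))"
      unfolding p_def using binomial_series_euler_kernel[OF assms(4,5) True] .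
    then show ?thesis
      using True p_nonneg
      by (simp add: ennreal_mult[symmetric] suminf_ennreal2 sums_iff)
  qed simp
  have coefficient: "ennreal (p n) * ennreal (fact n / ((s - 1) * pochhammer s n)) = ennreal (h n)" for n
  proof -
    have "pochhammer s n > 0"
      using assms by (intro pochhammer_pos) simp
    then have "p n * (fact n / ((s - 1) * pochhammer s n)) = h n"
      unfolding p_def h_def using assms by (simp add: pochhammer_fact[symmetric] field_simps)
    with \<open>pochhammer s n > 0\<close> show ?thesis
      using assms p_nonneg by (simp add: ennreal_mult[symmetric])
  qed
  have "(\<integral>\<^sup>+u. ennreal ((1 + u) powr (- (s - b)) * (1 + (1 - z) * u) powr (- b)) * indicator {0..} u \<partial>lborel)
      = (\<integral>\<^sup>+u. (\<Sum>n. ennreal (p n) * (ennreal (u ^ n * (1 + u) powr (- (s + n))) * indicator {0..} u)) \<partial>lborel)"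
    by (intro nn_integral_cong integrand)
  also have "\<dots> = (\<Sum>n. \<integral>\<^sup>+u. ennreal (p n) * (ennreal (u ^ n * (1 + u) powr (- (s + n))) * indicator {0..} u) \<partial>lborel)"
    by (intro nn_integral_suminf) auto
  also have "\<dots> = (\<Sum>n. ennreal (h n))"
    by (subst nn_integral_cmult)
      (auto simp del: minus_add_distrib simp: nn_integral_beta_prime[OF assms(1)] coefficient)
  also have "\<dots> = ennreal (\<Sum>n. h n)"
    using assms by (intro suminf_ennreal2[OF _ h_summable]) (simp add: h_def pochhammer_nonneg_real)
  also have "(\<Sum>n. h n) = hyp2F1 b 1 s z / (s - 1)"
    unfolding h_def hyp2F1_def using assms
    by (intro suminf_divide summable_hyp2F1_one) auto
  finally show ?thesis .
qed

lemma nn_integral_scale_halfline: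
  fixes F :: "real \<Rightarrow> ennreal" and c :: real
  assumes [measurable]: "F \<in> borel_measurable borel" and "c > 0"
  shows "(\<integral>\<^sup>+x. F (x / c) * indicator {0..} x \<partial>lborel) = c * (\<integral>\<^sup>+u. F u * indicator {0..} u \<partial>lborel)"
proof -
  have "(\<integral>\<^sup>+x. F (x / c) * indicator {0..} x \<partial>lborel)
      = \<bar>c\<bar> * (\<integral>\<^sup>+u. F ((0 + c * u) / c) * indicator {0..} (0 + c * u) \<partial>lborel)"
    using assms by (intro nn_integral_real_affine) auto
  also have "(\<lambda>u. F ((0 + c * u) / c) * indicator {0..} (0 + c * u)) = (\<lambda>u. F u * indicator {0..} u)"
    using assms by (auto simp: fun_eq_iff indicator_def zero_le_mult_iff)
  finally show ?thesis
    using assms by simp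
qed

lemma nn_integral_layer_cake:
  fixes f :: "'a \<Rightarrow> real"
  assumes "sigma_finite_measure M" and [measurable]: "f \<in> borel_measurable M"
  shows "(\<integral>\<^sup>+\<omega>. ennreal (f \<omega>) \<partial>M)
    = (\<integral>\<^sup>+x. emeasure M {\<omega>\<in>space M. x < f \<omega>} * indicator {0..} x \<partial>lborel)"
proof -
  interpret pair_sigma_finite M lborel
    using assms(1) lborel.sigma_finite_measure_axioms by (simp add: pair_sigma_finite_def)
  define G :: "'a \<Rightarrow> real \<Rightarrow> ennreal"
    where "G \<omega> x = indicator {\<omega>\<in>space M. x < f \<omega>} \<omega> * indicator {0..} x" for \<omega> x
  have [measurable]: "case_prod G \<in> borel_measurable (M \<Otimes>\<^sub>M lborel)"
    unfolding G_def case_prod_beta by measurable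
  have "ennreal (f \<omega>) = (\<integral>\<^sup>+x. G \<omega> x \<partial>lborel)" if "\<omega> \<in> space M" for \<omega>
  proof -
    have "(\<lambda>x. G \<omega> x) = indicator {0..<f \<omega>}"
      using that by (auto simp: G_def fun_eq_iff indicator_def)
    then show ?thesis
      by (cases "0 \<le> f \<omega>") (auto simp: ennreal_neg)
  qed
  then have "(\<integral>\<^sup>+\<omega>. ennreal (f \<omega>) \<partial>M) = (\<integral>\<^sup>+\<omega>. (\<integral>\<^sup>+x. G \<omega> x \<partial>lborel) \<partial>M)"
    by (intro nn_integral_cong) simp
  also have "\<dots> = (\<integral>\<^sup>+x. (\<integral>\<^sup>+\<omega>. G \<omega> x \<partial>M) \<partial>lborel)"
    by (rule Fubini'[symmetric]) measurable
  also have "\<dots> = (\<integral>\<^sup>+x. emeasure M {\<omega>\<in>space M. x < f \<omega>} * indicator {0..} x \<partial>lborel)"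
    unfolding G_def by (subst nn_integral_multc) auto
  finally show ?thesis .
qed

lemma VaR_nonneg:
  assumes "prob_space M" and Y: "Y \<in> borel_measurable M" and "AE \<omega> in M. 0 \<le> Y \<omega>"
    and "0 \<le> q" "q < 1"
  shows "0 \<le> VaR M q Y"
proof -
  interpret prob_space M by fact
  have cdf_neg: "measure M {\<omega>\<in>space M. Y \<omega> \<le> x} = 0" if "x < 0" for x
  proof -
    have "AE \<omega> in M. \<not> Y \<omega> \<le> x"
      using assms(3) by eventually_elim (use that in auto)
    then show ?thesis
      by (simp add: measure_def emeasure_eq_0_AE)
  qed
  have cdf: "cdf (distr M borel Y) x = measure M {\<omega>\<in>space M. Y \<omega> \<le> x}" for x
    using Y by (simp add: cdf_def measure_distr vimage_def Int_def conj_commute)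
  have "\<forall>\<^sub>F x in at_top. q < cdf (distr M borel Y) x"
    using real_distribution.cdf_lim_at_top_prob[OF real_distribution_distr[OF Y]] assms(5)
    by (rule order_tendstoD)
  then obtain x where x: "q < measure M {\<omega>\<in>space M. Y \<omega> \<le> x}"
    by (auto simp: cdf eventually_at_top_linorder)
  \<comment> \<open>one argument for both branches of \<open>VaR_def\<close>: \<open>P = (<) 0\<close> and \<open>P = (\<le>) q\<close>\<close>
  have "0 \<le> Inf {x. P (measure M {\<omega>\<in>space M. Y \<omega> \<le> x})}"
    if "P (measure M {\<omega>\<in>space M. Y \<omega> \<le> x})" "\<not> P 0" for P
    using that cdf_neg by (intro cInf_greatest) (auto simp: not_less[symmetric])
  from this[of "\<lambda>p. 0 < p"] this[of "\<lambda>p. q \<le> p"] show ?thesis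
    using x assms(4) by (auto simp: VaR_def)
qed

lemma LIMSEQ_measure_joint_exceedance:
  assumes "finite_measure M" "finite I" "\<And>i. i \<in> I \<Longrightarrow> X i \<in> borel_measurable M"
  shows "(\<lambda>m. measure M {\<omega>\<in>space M. \<forall>i\<in>I. y i + inverse (Suc m) < X i \<omega>})
    \<longlonglongrightarrow> measure M {\<omega>\<in>space M. \<forall>i\<in>I. y i < X i \<omega>}"
proof -
  interpret finite_measure M by fact
  define A where "A m = {\<omega>\<in>space M. \<forall>i\<in>I. y i + inverse (Suc m) < X i \<omega>}" for m :: nat
  have "incseq A"
  proof (rule incseq_SucI)
    fix m
    have "y i + inverse (Suc (Suc m)) < X i \<omega>" if "y i + inverse (Suc m) < X i \<omega>" for i \<omega>
    proof -
      have "inverse (real (Suc (Suc m))) \<le> inverse (Suc m)"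
        by (simp add: field_simps)
      with that show ?thesis
        by linarith
    qed
    then show "A m \<subseteq> A (Suc m)"
      unfolding A_def by blast
  qed
  moreover have "range A \<subseteq> sets M"
    unfolding A_def using assms(2,3) by (auto intro!: sets.sets_Collect_finite_All)
  moreover have "(\<Union>m. A m) = {\<omega>\<in>space M. \<forall>i\<in>I. y i < X i \<omega>}"
  proof (intro equalityI subsetI)
    fix \<omega> assume "\<omega> \<in> (\<Union>m. A m)"
    then show "\<omega> \<in> {\<omega>\<in>space M. \<forall>i\<in>I. y i < X i \<omega>}"
      unfolding A_def by (auto intro: less_trans[rotated] simp del: of_nat_Suc)
  next
    fix \<omega> assume \<omega>: "\<omega> \<in> {\<omega>\<in>space M. \<forall>i\<in>I. y i < X i \<omega>}"
    have "\<forall>\<^sub>F m in sequentially. \<forall>i\<in>I. y i + inverse (Suc m) < X i \<omega>"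
    proof (rule eventually_ball_finite[OF assms(2)], intro ballI)
      fix i assume "i \<in> I"
      with \<omega> have "0 < X i \<omega> - y i"
        by simp
      from order_tendstoD(2)[OF LIMSEQ_inverse_real_of_nat this]
      show "\<forall>\<^sub>F m in sequentially. y i + inverse (Suc m) < X i \<omega>"
        by eventually_elim simp
    qed
    then show "\<omega> \<in> (\<Union>m. A m)"
      using \<omega> unfolding A_def eventually_sequentially by blast
  qed
  ultimately show ?thesis
    using finite_Lim_measure_incseq[of A] unfolding A_def by simp
qed

lemma powr_common_shock_factor:
  fixes a t g ck cl :: real
  assumes "ck \<in> {0, 1}" "cl \<in> {0, 1}" "0 \<le> a" "0 \<le> t"
  shows "(1 + (ck * a + cl * t)) powr (- g)
    = (1 + t) powr (- (cl * g)) * (1 + a) powr (- (ck * g - ck * cl * g))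
      * (1 + (1 - t / (1 + t)) * a) powr (- (ck * cl * g))"
proof -
  have "1 + (a + t) = (1 + t) * (1 + (1 - t / (1 + t)) * a)"
    using assms by (simp add: field_simps)
  moreover have "0 < 1 + (1 - t / (1 + t)) * a"
    using assms by (simp add: field_simps add_pos_nonneg)
  ultimately show ?thesis
    using assms by (auto simp: powr_mult)
qed

lemma prod_powr_common_shock_factor:
  fixes a t :: real and ck cl g :: "nat \<Rightarrow> real"
  assumes "\<And>j. j \<in> J \<Longrightarrow> ck j \<in> {0, 1}" "\<And>j. j \<in> J \<Longrightarrow> cl j \<in> {0, 1}" "0 \<le> a" "0 \<le> t"
  shows "(\<Prod>j\<in>J. (1 + (ck j * a + cl j * t)) powr (- g j))
    = (1 + t) powr (- (\<Sum>j\<in>J. cl j * g j))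
      * (1 + a) powr (- ((\<Sum>j\<in>J. ck j * g j) - (\<Sum>j\<in>J. ck j * cl j * g j)))
      * (1 + (1 - t / (1 + t)) * a) powr (- (\<Sum>j\<in>J. ck j * cl j * g j))"
proof -
  have "0 < 1 + (1 - t / (1 + t)) * a"
    using assms by (simp add: field_simps add_pos_nonneg)
  have "(\<Prod>j\<in>J. (1 + (ck j * a + cl j * t)) powr (- g j))
      = (\<Prod>j\<in>J. (1 + t) powr (- (cl j * g j)) * (1 + a) powr (- (ck j * g j - ck j * cl j * g j))
          * (1 + (1 - t / (1 + t)) * a) powr (- (ck j * cl j * g j)))"
    using assms by (intro prod.cong refl powr_common_shock_factor) auto
  also have "\<dots> = (1 + t) powr (\<Sum>j\<in>J. - (cl j * g j))
      * (1 + a) powr (\<Sum>j\<in>J. - (ck j * g j - ck j * cl j * g j))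
      * (1 + (1 - t / (1 + t)) * a) powr (\<Sum>j\<in>J. - (ck j * cl j * g j))"
    using assms \<open>0 < 1 + (1 - t / (1 + t)) * a\<close> by (simp add: prod.distrib powr_sum)
  finally show ?thesis
    by (simp add: sum_negf sum_subtractf)
qed

locale pareto_common_shock = prob_space M
  for M :: "'a measure" +
  fixes n :: nat and c :: "nat \<Rightarrow> nat \<Rightarrow> real"
    and \<sigma> :: "nat \<Rightarrow> real" and \<gamma> :: "nat \<Rightarrow> real" and X :: "nat \<Rightarrow> 'a \<Rightarrow> real"
  assumes c_01: "\<And>i j. i \<in> {1..n} \<Longrightarrow> j \<in> {1..n+1} \<Longrightarrow> c i j \<in> {0, 1}"
    and \<sigma>_pos: "\<And>i. i \<in> {1..n} \<Longrightarrow> \<sigma> i > 0"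
    and \<gamma>_pos: "\<And>j. j \<in> {1..n+1} \<Longrightarrow> \<gamma> j > 0"
    and X_measurable: "\<And>i. i \<in> {1..n} \<Longrightarrow> X i \<in> borel_measurable M"
    and joint_survival: "\<And>x :: nat \<Rightarrow> real. (\<forall>i\<in>{1..n}. x i > 0) \<Longrightarrow>
           measure M {\<omega>\<in>space M. \<forall>i\<in>{1..n}. X i \<omega> > x i}
             = (\<Prod>j=1..n+1. (1 + (\<Sum>i=1..n. c i j * x i / \<sigma> i)) powr (- \<gamma> j))"
begin

definition gamma_star :: "nat \<Rightarrow> real" where
  "gamma_star k = (\<Sum>j=1..n+1. c k j * \<gamma> j)"

definition gamma_pair :: "nat \<Rightarrow> nat \<Rightarrow> real" where
  "gamma_pair k l = (\<Sum>j=1..n+1. c k j * c l j * \<gamma> j)"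

text \<open>The hypothesis only covers strictly positive thresholds; zero thresholds, which give the
  margins and the almost sure positivity, follow by continuity from the right.\<close>
lemma joint_survival_nonneg:
  assumes y: "\<And>i. i \<in> {1..n} \<Longrightarrow> 0 \<le> y i"
  shows "measure M {\<omega>\<in>space M. \<forall>i\<in>{1..n}. y i < X i \<omega>}
    = (\<Prod>j=1..n+1. (1 + (\<Sum>i=1..n. c i j * y i / \<sigma> i)) powr (- \<gamma> j))"
proof (rule LIMSEQ_unique)
  let ?y = "\<lambda>m i. y i + inverse (Suc m)"
  show "(\<lambda>m. measure M {\<omega>\<in>space M. \<forall>i\<in>{1..n}. ?y m i < X i \<omega>})
      \<longlonglongrightarrow> measure M {\<omega>\<in>space M. \<forall>i\<in>{1..n}. y i < X i \<omega>}"
    using X_measurable by (intro LIMSEQ_measure_joint_exceedance) (auto intro: finite_measure_axioms)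
  have "\<forall>i\<in>{1..n}. ?y m i > 0" for m
    using y by (simp add: add_nonneg_pos)
  then have "measure M {\<omega>\<in>space M. \<forall>i\<in>{1..n}. ?y m i < X i \<omega>}
      = (\<Prod>j=1..n+1. (1 + (\<Sum>i=1..n. c i j * ?y m i / \<sigma> i)) powr (- \<gamma> j))" for m
    by (rule joint_survival)
  moreover have "(\<lambda>m. \<Prod>j=1..n+1. (1 + (\<Sum>i=1..n. c i j * ?y m i / \<sigma> i)) powr (- \<gamma> j))
      \<longlonglongrightarrow> (\<Prod>j=1..n+1. (1 + (\<Sum>i=1..n. c i j * y i / \<sigma> i)) powr (- \<gamma> j))"
  proof (intro tendsto_prod tendsto_powr tendsto_const)
    fix j assume j: "j \<in> {1..n+1}"
    show "(\<lambda>m. 1 + (\<Sum>i=1..n. c i j * ?y m i / \<sigma> i)) \<longlonglongrightarrow> 1 + (\<Sum>i=1..n. c i j * y i / \<sigma> i)"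
      using \<sigma>_pos by (intro tendsto_intros LIMSEQ_inverse_real_of_nat_add) force
    have "0 \<le> c i j * y i / \<sigma> i" if "i \<in> {1..n}" for i
      using c_01[OF that j] y[OF that] \<sigma>_pos[OF that] by auto
    then have "0 \<le> (\<Sum>i=1..n. c i j * y i / \<sigma> i)"
      by (rule sum_nonneg)
    then show "1 + (\<Sum>i=1..n. c i j * y i / \<sigma> i) \<noteq> 0"
      by linarith
  qed
  ultimately show "(\<lambda>m. measure M {\<omega>\<in>space M. \<forall>i\<in>{1..n}. ?y m i < X i \<omega>})
      \<longlonglongrightarrow> (\<Prod>j=1..n+1. (1 + (\<Sum>i=1..n. c i j * y i / \<sigma> i)) powr (- \<gamma> j))"
    by simp
qed

lemma AE_X_pos: "AE \<omega> in M. \<forall>i\<in>{1..n}. 0 < X i \<omega>"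
proof -
  have "prob {\<omega>\<in>space M. \<forall>i\<in>{1..n}. 0 < X i \<omega>} = 1"
    using joint_survival_nonneg[of "\<lambda>_. 0"] by simp
  then have "AE \<omega> in M. \<omega> \<in> {\<omega>\<in>space M. \<forall>i\<in>{1..n}. 0 < X i \<omega>}"
    by (rule AE_prob_1)
  then show ?thesis
    by simp
qed

lemma bivariate_survival:
  assumes kl: "k \<in> {1..n}" "l \<in> {1..n}" "k \<noteq> l" and "0 \<le> a" "0 \<le> t"
  shows "measure M {\<omega>\<in>space M. a < X k \<omega> \<and> t < X l \<omega>}
    = (1 + t / \<sigma> l) powr (- gamma_star l) * (1 + a / \<sigma> k) powr (- (gamma_star k - gamma_pair k l))
      * (1 + (1 - t / (\<sigma> l + t)) * (a / \<sigma> k)) powr (- gamma_pair k l)"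
proof -
  define y where "y i = (if i = k then a else if i = l then t else 0)" for i
  have "measure M {\<omega>\<in>space M. a < X k \<omega> \<and> t < X l \<omega>}
      = measure M {\<omega>\<in>space M. \<forall>i\<in>{1..n}. y i < X i \<omega>}"
  proof (rule measure_eq_AE)
    show "AE \<omega> in M. (\<omega> \<in> {\<omega>\<in>space M. a < X k \<omega> \<and> t < X l \<omega>})
        = (\<omega> \<in> {\<omega>\<in>space M. \<forall>i\<in>{1..n}. y i < X i \<omega>})"
      using AE_X_pos by eventually_elim (use kl in \<open>auto simp: y_def\<close>)
    show "{\<omega>\<in>space M. \<forall>i\<in>{1..n}. y i < X i \<omega>} \<in> sets M"
      using X_measurable by (intro sets.sets_Collect_finite_All) auto
  qed (use X_measurable kl in measurable)
  also have "\<dots> = (\<Prod>j=1..n+1. (1 + (c k j * (a / \<sigma> k) + c l j * (t / \<sigma> l))) powr (- \<gamma> j))"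
  proof -
    have "(\<Sum>i=1..n. c i j * y i / \<sigma> i)
        = (\<Sum>i=1..n. (if i = k then c k j * (a / \<sigma> k) else 0) + (if i = l then c l j * (t / \<sigma> l) else 0))" for j
      using kl(3) by (intro sum.cong) (auto simp: y_def)
    also have "\<dots> j = c k j * (a / \<sigma> k) + c l j * (t / \<sigma> l)" for j
      using kl(1,2) by (simp add: sum.distrib)
    finally have sums: "(\<Sum>i=1..n. c i j * y i / \<sigma> i) = c k j * (a / \<sigma> k) + c l j * (t / \<sigma> l)" for j .
    have "measure M {\<omega>\<in>space M. \<forall>i\<in>{1..n}. y i < X i \<omega>}
        = (\<Prod>j=1..n+1. (1 + (\<Sum>i=1..n. c i j * y i / \<sigma> i)) powr (- \<gamma> j))"
      using assms by (intro joint_survival_nonneg) (simp add: y_def)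
    then show ?thesis
      by (simp only: sums)
  qed
  also have "\<dots> = (1 + t / \<sigma> l) powr (- gamma_star l)
      * (1 + a / \<sigma> k) powr (- (gamma_star k - gamma_pair k l))
      * (1 + (1 - (t / \<sigma> l) / (1 + t / \<sigma> l)) * (a / \<sigma> k)) powr (- gamma_pair k l)"
    unfolding gamma_star_def gamma_pair_def
    using assms \<sigma>_pos[OF kl(1)] \<sigma>_pos[OF kl(2)] c_01 by (intro prod_powr_common_shock_factor) auto
  also have "(t / \<sigma> l) / (1 + t / \<sigma> l) = t / (\<sigma> l + t)"
    using \<sigma>_pos[OF kl(2)] by (simp add: field_simps)
  finally show ?thesis .
qed

lemma gamma_pair_nonneg:
  assumes "k \<in> {1..n}" "l \<in> {1..n}"
  shows "0 \<le> gamma_pair k l"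
  unfolding gamma_pair_def
proof (rule sum_nonneg)
  fix j assume j: "j \<in> {1..n+1}"
  show "0 \<le> c k j * c l j * \<gamma> j"
    using c_01[OF assms(1) j] c_01[OF assms(2) j] \<gamma>_pos[OF j] by auto
qed

lemma gamma_pair_le_gamma_star:
  assumes "k \<in> {1..n}" "l \<in> {1..n}"
  shows "gamma_pair k l \<le> gamma_star k"
  unfolding gamma_pair_def gamma_star_def
proof (rule sum_mono)
  fix j assume j: "j \<in> {1..n+1}"
  show "c k j * c l j * \<gamma> j \<le> c k j * \<gamma> j"
    using c_01[OF assms(1) j] c_01[OF assms(2) j] \<gamma>_pos[OF j] by auto
qed

lemma tail_probability:
  assumes "k \<in> {1..n}" "l \<in> {1..n}" "k \<noteq> l" "0 \<le> t"
  shows "measure M {\<omega>\<in>space M. t < X l \<omega>} = (1 + t / \<sigma> l) powr (- gamma_star l)"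
proof -
  have "measure M {\<omega>\<in>space M. t < X l \<omega>} = measure M {\<omega>\<in>space M. 0 < X k \<omega> \<and> t < X l \<omega>}"
  proof (rule measure_eq_AE)
    show "AE \<omega> in M. (\<omega> \<in> {\<omega>\<in>space M. t < X l \<omega>})
        = (\<omega> \<in> {\<omega>\<in>space M. 0 < X k \<omega> \<and> t < X l \<omega>})"
      using AE_X_pos by eventually_elim (use assms(1) in auto)
  qed (use X_measurable assms(1,2) in measurable)
  then show ?thesis
    using bivariate_survival[OF assms(1-3) order_refl assms(4)] by simp
qed

lemma nn_integral_X_on_tail:
  assumes kl: "k \<in> {1..n}" "l \<in> {1..n}" "k \<noteq> l" and s: "gamma_star k > 1" and "0 \<le> t"
  shows "(\<integral>\<^sup>+\<omega>. ennreal (indicator {\<omega>\<in>space M. t < X l \<omega>} \<omega> * X k \<omega>) \<partial>M)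
    = ennreal ((1 + t / \<sigma> l) powr (- gamma_star l) * \<sigma> k
        * (hyp2F1 (gamma_pair k l) 1 (gamma_star k) (t / (\<sigma> l + t)) / (gamma_star k - 1)))"
proof -
  let ?A = "{\<omega>\<in>space M. t < X l \<omega>}"
  define z where "z = t / (\<sigma> l + t)"
  define P where "P = (1 + t / \<sigma> l) powr (- gamma_star l)"
  define F where "F u = (1 + u) powr (- (gamma_star k - gamma_pair k l))
    * (1 + (1 - z) * u) powr (- gamma_pair k l)" for u
  have \<sigma>k: "\<sigma> k > 0" and z: "0 \<le> z" "z < 1"
    using \<sigma>_pos[OF kl(1)] \<sigma>_pos[OF kl(2)] \<open>0 \<le> t\<close> by (auto simp: z_def)
  have [measurable]: "X k \<in> borel_measurable M" "X l \<in> borel_measurable M"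
    using X_measurable kl by auto
  have "emeasure M {\<omega>\<in>space M. x < indicator ?A \<omega> * X k \<omega>} * indicator {0..} x
      = ennreal P * (ennreal (F (x / \<sigma> k)) * indicator {0..} x)" for x
  proof (cases "0 \<le> x")
    case True
    then have "{\<omega>\<in>space M. x < indicator ?A \<omega> * X k \<omega>} = {\<omega>\<in>space M. x < X k \<omega> \<and> t < X l \<omega>}"
      by (auto simp: indicator_def)
    with True show ?thesis
      using bivariate_survival[OF kl True \<open>0 \<le> t\<close>]
      by (simp add: emeasure_eq_measure P_def F_def z_def ennreal_mult[symmetric])
  qed simp
  then have "(\<integral>\<^sup>+\<omega>. ennreal (indicator ?A \<omega> * X k \<omega>) \<partial>M)
      = (\<integral>\<^sup>+x. ennreal P * (ennreal (F (x / \<sigma> k)) * indicator {0..} x) \<partial>lborel)"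
    by (simp add: nn_integral_layer_cake[OF sigma_finite_measure_axioms])
  also have "\<dots> = ennreal P * (\<integral>\<^sup>+x. ennreal (F (x / \<sigma> k)) * indicator {0..} x \<partial>lborel)"
    unfolding F_def by (intro nn_integral_cmult) measurable
  also have "(\<integral>\<^sup>+x. ennreal (F (x / \<sigma> k)) * indicator {0..} x \<partial>lborel)
      = \<sigma> k * (\<integral>\<^sup>+u. ennreal (F u) * indicator {0..} u \<partial>lborel)"
    using \<sigma>k by (intro nn_integral_scale_halfline[where F = "\<lambda>u. ennreal (F u)"]) (simp_all add: F_def)
  also have "(\<integral>\<^sup>+u. ennreal (F u) * indicator {0..} u \<partial>lborel)
      = ennreal (hyp2F1 (gamma_pair k l) 1 (gamma_star k) z / (gamma_star k - 1))"
    unfolding F_def using z s gamma_pair_nonneg[OF kl(1,2)] gamma_pair_le_gamma_star[OF kl(1,2)]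
    by (intro nn_integral_hyp2F1_euler) auto
  finally show ?thesis
    using \<sigma>k z s gamma_pair_nonneg[OF kl(1,2)] gamma_pair_le_gamma_star[OF kl(1,2)]
      hyp2F1_one_nonneg[of "gamma_pair k l" "gamma_star k" z]
    by (simp add: P_def z_def ennreal_mult[symmetric] mult.assoc)
qed

lemma tail_conditional_expectation:
  assumes kl: "k \<in> {1..n}" "l \<in> {1..n}" "k \<noteq> l" and s: "gamma_star k > 1" and "0 \<le> t"
  shows "cond_exp_event M (X k) {\<omega>\<in>space M. t < X l \<omega>}
    = \<sigma> k / (gamma_star k - 1) * hyp2F1 (gamma_pair k l) 1 (gamma_star k) (t / (\<sigma> l + t))"
proof -
  let ?A = "{\<omega>\<in>space M. t < X l \<omega>}"
  let ?P = "(1 + t / \<sigma> l) powr (- gamma_star l)"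
  let ?H = "hyp2F1 (gamma_pair k l) 1 (gamma_star k) (t / (\<sigma> l + t))"
  have "0 \<le> t / \<sigma> l"
    using \<sigma>_pos[OF kl(2)] \<open>0 \<le> t\<close> by simp
  then have P_pos: "?P > 0"
    by simp
  have "0 \<le> ?H"
    using s \<sigma>_pos[OF kl(2)] \<open>0 \<le> t\<close> gamma_pair_nonneg[OF kl(1,2)] gamma_pair_le_gamma_star[OF kl(1,2)]
    by (intro hyp2F1_one_nonneg) auto
  then have "0 \<le> ?P * \<sigma> k * (?H / (gamma_star k - 1))"
    using s \<sigma>_pos[OF kl(1)] by simp
  moreover have "AE \<omega> in M. 0 \<le> indicator ?A \<omega> * X k \<omega>"
    using AE_X_pos
  proof eventually_elim
    case (elim \<omega>)
    then have "0 < X k \<omega>"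
      using kl(1) by blast
    then show ?case
      by (simp add: indicator_def)
  qed
  moreover have "(\<lambda>\<omega>. indicator ?A \<omega> * X k \<omega>) \<in> borel_measurable M"
    using X_measurable kl by measurable
  ultimately have "(\<integral>\<omega>. indicator ?A \<omega> * X k \<omega> \<partial>M) = ?P * \<sigma> k * (?H / (gamma_star k - 1))"
    by (simp add: integral_eq_nn_integral nn_integral_X_on_tail[OF assms])
  moreover have "measure M ?A = ?P"
    using tail_probability[OF kl \<open>0 \<le> t\<close>] .
  ultimately show ?thesis
    using P_pos by (simp add: cond_exp_event_def)
qed

end

theorem proposition4p5:
  fixes M :: "'a measure" and n :: nat and c :: "nat \<Rightarrow> nat \<Rightarrow> real"
    and \<sigma> :: "nat \<Rightarrow> real" and \<gamma> :: "nat \<Rightarrow> real" and X :: "nat \<Rightarrow> 'a \<Rightarrow> real"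
    and k l :: nat and q :: real
  assumes "prob_space M"
    and "n \<ge> 2"
    and "\<And>i j. i \<in> {1..n} \<Longrightarrow> j \<in> {1..n+1} \<Longrightarrow> c i j \<in> {0, 1}"
    and "\<And>i. i \<in> {1..n} \<Longrightarrow> \<sigma> i > 0"
    and "\<And>j. j \<in> {1..n+1} \<Longrightarrow> \<gamma> j > 0"
    and "\<And>i. i \<in> {1..n} \<Longrightarrow> X i \<in> borel_measurable M"
    and "\<And>x :: nat \<Rightarrow> real. (\<forall>i\<in>{1..n}. x i > 0) \<Longrightarrow>
           measure M {\<omega>\<in>space M. \<forall>i\<in>{1..n}. X i \<omega> > x i}
             = (\<Prod>j=1..n+1. (1 + (\<Sum>i=1..n. c i j * x i / \<sigma> i)) powr (- \<gamma> j))"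
    and "k \<in> {1..n}" and "l \<in> {1..n}" and "k \<noteq> l"
    and "(\<Sum>j=1..n+1. c k j * \<gamma> j) > 1"
    and "0 \<le> q" and "q < 1"
  shows "cond_exp_event M (X k) {\<omega>\<in>space M. X l \<omega> > VaR M q (X l)}
           = \<sigma> k / ((\<Sum>j=1..n+1. c k j * \<gamma> j) - 1)
             * hyp2F1 (\<Sum>j=1..n+1. c k j * c l j * \<gamma> j) 1 (\<Sum>j=1..n+1. c k j * \<gamma> j)
                 (VaR M q (X l) / (\<sigma> l + VaR M q (X l)))"
proof -
  interpret pareto_common_shock M n c \<sigma> \<gamma> X
    by (intro pareto_common_shock.intro pareto_common_shock_axioms.intro) (fact assms)+
  have "AE \<omega> in M. 0 \<le> X l \<omega>"
    using AE_X_pos by eventually_elim (meson assms(9) less_imp_le)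
  then have "0 \<le> VaR M q (X l)"
    using assms(1,6,9,12,13) by (intro VaR_nonneg) auto
  moreover have "gamma_star k > 1"
    using assms(11) by (simp add: gamma_star_def)
  ultimately show ?thesis
    using tail_conditional_expectation[OF assms(8-10)] by (simp add: gamma_star_def gamma_pair_def)
qed

end
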